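(* Let $\alpha\in\{0,1\}$, $u\geqslant 1$ and $b\geqslant 16u-1$ be integers. There exists a set $\mathfrak{A}$ of $2u$ integer $3\times 3$ matrices such that the multiset of absolute values of all entries of all matrices in $\mathfrak{A}$ is exactly the set $$[1,16u-1]_2\cup[2,8u-2]_4\cup[b+1,b+4u]\cup[b+10u+1,b+12u]\cup[b+16u+1,b+18u]$$ (each element occurring once), and for every $A\in\mathfrak{A}$ one has $\sigma_r(A)=(0,0,0)$ and $\sigma_c(A)=(4\alpha,-2\alpha,-2\alpha)$.
   Context: For integers $a\equiv b\pmod d$ with $d\geqslant1$, $[a,b]_d=\{a+id: 0\leqslant i\leqslant (b-a)/d\}$ if $a\leqslant b$ and $[a,b]_d=\varnothing$ if $a>b$; $[a,b]=[a,b]_1$. For a matrix $A$, $\sigma_r(A)$ is the sequence of its row sums (top to bottom) and $\sigma_c(A)$ the sequence of its column sums (left to right). *)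

theory Defs
  imports "HOL-Analysis.Analysis" "HOL-Library.Multiset"
begin

definition step_interval :: "int \<Rightarrow> int \<Rightarrow> int \<Rightarrow> int set" where
  "step_interval a b d = (if a \<le> b then {a + i * d | i. 0 \<le> i \<and> i \<le> (b - a) div d} else {})"

definition abs_entries :: "int^3^3 \<Rightarrow> int multiset" where
  "abs_entries A = image_mset (\<lambda>(i, j). \<bar>A $ i $ j\<bar>) (mset_set (UNIV :: (3 \<times> 3) set))"

definition row_sums :: "int^3^3 \<Rightarrow> int list" where
  "row_sums A = map (\<lambda>i. \<Sum>j\<in>UNIV. A $ i $ j) [0, 1, 2 :: 3]"

definition col_sums :: "int^3^3 \<Rightarrow> int list" where
  "col_sums A = map (\<lambda>j. \<Sum>i\<in>UNIV. A $ i $ j) [0, 1, 2 :: 3]"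

end

theory Submission
  imports Defs
begin

text \<open>For i = 1, ..., u take the matrices A_i = mat_A \<alpha> b u i and B_i = mat_B \<alpha> b u i; their rows
  sum to 0 and their columns to (4\<alpha>, -2\<alpha>, -2\<alpha>) by inspection. Each of the 18 entries of A_i and B_i is, up to
  sign, an affine function c \<plusminus> d i of i with d \<in> {2, 4, 8}, so as i runs through [1, u] it traces
  an arithmetic progression [a, a + (u - 1) d]_d. These 18 progressions tile the five blocks of the
  target set (the odd block splits into quarters, each the union of the two residue classes
  modulo 4; for \<alpha> = 1 the \<alpha>-dependent progressions merely swap roles). Hence the absolute values
  cover the target set, and since there are 18u of them and the target set has 18u elements, each
  occurs exactly once.\<close>

lemma step_interval_iff:
  fixes d :: int
  assumes "d > 0"
  shows "x \<in> step_interval a b d \<longleftrightarrow> a \<le> x \<and> x \<le> b \<and> d dvd (x - a)"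
proof
  assume "x \<in> step_interval a b d"
  then obtain j where "a \<le> b" "0 \<le> j" "j \<le> (b - a) div d" "x = a + j * d"
    by (auto simp: step_interval_def split: if_splits)
  moreover have "j * d \<le> b - a"
  proof -
    have "j * d \<le> (b - a) div d * d"
      using \<open>j \<le> (b - a) div d\<close> assms by simp
    also have "\<dots> \<le> b - a"
      using minus_mod_eq_div_mult[of "b - a" d] pos_mod_sign[of d "b - a"] assms by linarith
    finally show ?thesis .
  qed
  ultimately show "a \<le> x \<and> x \<le> b \<and> d dvd (x - a)"
    using assms by simp
next
  assume x: "a \<le> x \<and> x \<le> b \<and> d dvd (x - a)"
  then obtain j where j: "x - a = j * d"
    by (metis dvdE mult.commute)
  have "0 \<le> j * d"
    using x j by simp
  then have "0 \<le> j"
    using assms by (simp add: zero_le_mult_iff)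
  moreover have "j \<le> (b - a) div d"
    using zdiv_mono1[of "x - a" "b - a" d] x j assms by simp
  ultimately show "x \<in> step_interval a b d"
    using x j by (auto simp: step_interval_def algebra_simps)
qed

lemma finite_step_interval: "finite (step_interval a b d)"
proof -
  have "{a + i * d | i. 0 \<le> i \<and> i \<le> (b - a) div d} = (\<lambda>i. a + i * d) ` {0..(b - a) div d}"
    by auto
  then show ?thesis
    by (simp add: step_interval_def)
qed

lemma card_step_interval:
  assumes "d > 0" "a \<le> b"
  shows "card (step_interval a b d) = nat ((b - a) div d + 1)"
proof -
  have "step_interval a b d = (\<lambda>j. a + j * d) ` {0..(b - a) div d}"
    using assms by (auto simp: step_interval_def)
  moreover have "inj_on (\<lambda>j. a + j * d) {0..(b - a) div d}"
    using assms by (auto simp: inj_on_def)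
  ultimately show ?thesis
    by (simp add: card_image)
qed

lemma image_add_mult_atLeastAtMost:
  fixes c d :: int
  assumes "d > 0"
  shows "(\<lambda>i. c + d * i) ` {1..u} = step_interval (c + d) (c + d * u) d"
proof (rule set_eqI)
  fix x
  have "(\<exists>i\<in>{1..u}. x = c + d * i) \<longleftrightarrow> c + d \<le> x \<and> x \<le> c + d * u \<and> d dvd (x - (c + d))"
  proof
    assume "\<exists>i\<in>{1..u}. x = c + d * i"
    then obtain i where "1 \<le> i" "i \<le> u" "x = c + d * i"
      by auto
    moreover have "x - (c + d) = d * (i - 1)"
      using \<open>x = c + d * i\<close> by (simp add: algebra_simps)
    ultimately show "c + d \<le> x \<and> x \<le> c + d * u \<and> d dvd (x - (c + d))"
      using assms by auto
  next
    assume x: "c + d \<le> x \<and> x \<le> c + d * u \<and> d dvd (x - (c + d))"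
    then obtain j where j: "x - (c + d) = d * j"
      by (auto elim: dvdE)
    have "0 \<le> d * j"
      using x j by simp
    then have "0 \<le> j"
      using assms by (simp add: zero_le_mult_iff)
    have "d * (j + 1) \<le> d * u"
      using x j by (simp add: algebra_simps)
    then have "j \<le> u - 1"
      using assms by simp
    with \<open>0 \<le> j\<close> show "\<exists>i\<in>{1..u}. x = c + d * i"
      using j by (intro bexI[of _ "j + 1"]) (auto simp: algebra_simps)
  qed
  then show "x \<in> (\<lambda>i. c + d * i) ` {1..u} \<longleftrightarrow> x \<in> step_interval (c + d) (c + d * u) d"
    using assms by (auto simp: step_interval_iff)
qed

lemma image_diff_mult_atLeastAtMost:
  fixes c d :: int
  assumes "d > 0"
  shows "(\<lambda>i. c - d * i) ` {1..u} = step_interval (c - d * u) (c - d) d"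
proof -
  have "(\<lambda>i. c - d * i) = (\<lambda>i. (c - d * (u + 1)) + d * i) \<circ> (\<lambda>i. u + 1 - i)"
    by (simp add: fun_eq_iff algebra_simps)
  then have "(\<lambda>i. c - d * i) ` {1..u} = (\<lambda>i. (c - d * (u + 1)) + d * i) ` ((\<lambda>i. u + 1 - i) ` {1..u})"
    by (simp only: image_comp)
  also have "(\<lambda>i. u + 1 - i) ` {1..u} = {1..u}"
    by (auto simp: image_iff intro: bexI[of _ "u + 1 - _"])
  also have "(\<lambda>i. (c - d * (u + 1)) + d * i) ` {1..u}
      = step_interval (c - d * (u + 1) + d) (c - d * (u + 1) + d * u) d"
    by (rule image_add_mult_atLeastAtMost[OF assms])
  also have "c - d * (u + 1) + d = c - d * u"
    by (simp add: algebra_simps)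
  also have "c - d * (u + 1) + d * u = c - d"
    by (simp add: algebra_simps)
  finally show ?thesis .
qed

lemma mset_set_eqI:
  assumes "set_mset M = S" and "size M = card S"
  shows "M = mset_set S"
proof -
  have sub: "mset_set S \<subseteq># M"
    using mset_set_set_mset_msubset[of M] assms(1) by simp
  have "size (mset_set S) = size M"
    using assms(2) by simp
  then have "\<not> mset_set S \<subset># M"
    by (metis less_irrefl mset_subset_size)
  with sub have "mset_set S = M"
    by (simp add: subset_mset.le_less)
  then show ?thesis ..
qed

definition mat3x3 :: "int \<Rightarrow> int \<Rightarrow> int \<Rightarrow> int \<Rightarrow> int \<Rightarrow> int \<Rightarrow> int \<Rightarrow> int \<Rightarrow> int \<Rightarrow> int^3^3" where
  "mat3x3 a11 a12 a13 a21 a22 a23 a31 a32 a33 = (\<chi> i j.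
     if i = 0 then (if j = 0 then a11 else if j = 1 then a12 else a13)
     else if i = 1 then (if j = 0 then a21 else if j = 1 then a22 else a23)
     else (if j = 0 then a31 else if j = 1 then a32 else a33))"

lemma row_sums_mat3x3:
  "row_sums (mat3x3 a11 a12 a13 a21 a22 a23 a31 a32 a33) = [a11 + a12 + a13, a21 + a22 + a23, a31 + a32 + a33]"
  by (simp add: row_sums_def mat3x3_def sum_3 ac_simps)

lemma col_sums_mat3x3:
  "col_sums (mat3x3 a11 a12 a13 a21 a22 a23 a31 a32 a33) = [a11 + a21 + a31, a12 + a22 + a32, a13 + a23 + a33]"
  by (simp add: col_sums_def mat3x3_def sum_3 ac_simps)

lemma abs_entries_mat3x3:
  "abs_entries (mat3x3 a11 a12 a13 a21 a22 a23 a31 a32 a33) =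
     mset [\<bar>a11\<bar>, \<bar>a12\<bar>, \<bar>a13\<bar>, \<bar>a21\<bar>, \<bar>a22\<bar>, \<bar>a23\<bar>, \<bar>a31\<bar>, \<bar>a32\<bar>, \<bar>a33\<bar>]"
proof -
  let ?ij = "[(0,0), (0,1), (0,2), (1,0), (1,1), (1,2), (2,0), (2,1), (2,2)] :: (3 \<times> 3) list"
  have "(UNIV :: 3 set) = {0, 1, 2}"
    using exhaust_3 by fastforce
  then have univ: "(UNIV :: (3 \<times> 3) set) = set ?ij"
    by auto
  have "mset_set (UNIV :: (3 \<times> 3) set) = mset ?ij"
    unfolding univ by (rule mset_set_set) simp
  then show ?thesis
    by (simp add: abs_entries_def mat3x3_def flip: mset_map)
qed

definition mat_A :: "int \<Rightarrow> int \<Rightarrow> int \<Rightarrow> int \<Rightarrow> int^3^3" where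
  "mat_A \<alpha> b u i = mat3x3
     (4*i - 1)             (b + 2*u + 1 - 2*i)     (- (b + 2*u + 2*i))
     (4*i - 8*u - 1)       (- (b + 10*u + 2*i))    (b + 18*u + 1 - 2*i)
     (4*\<alpha> + 8*u + 2 - 8*i) (8*u - 1 + 4*i - 2*\<alpha>) (4*i - 16*u - 1 - 2*\<alpha>)"

definition mat_B :: "int \<Rightarrow> int \<Rightarrow> int \<Rightarrow> int \<Rightarrow> int^3^3" where
  "mat_B \<alpha> b u i = mat3x3
     (4*i - 4*u - 1)       (b + 4*u + 1 - 2*i)      (- (b + 2*i))
     (4*u + 4*i - 1)       (- (b + 16*u + 2*i))     (b + 12*u + 1 - 2*i)
     (4*\<alpha> + 2 - 8*i)      (12*u - 1 + 4*i - 2*\<alpha>) (4*i - 12*u - 1 - 2*\<alpha>)"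

text \<open>Each value is written as c + d * i or c - d * i with d a positive numeral: these are the
  shapes image_affine_atLeastAtMost matches syntactically.\<close>

definition abs_values_A :: "int \<Rightarrow> int \<Rightarrow> int \<Rightarrow> int \<Rightarrow> int list" where
  "abs_values_A \<alpha> b u i =
     [- 1 + 4*i, b + 2*u + 1 - 2*i, b + 2*u + 2*i,
      8*u + 1 - 4*i, b + 10*u + 2*i, b + 18*u + 1 - 2*i,
      8*u + 2 + 4*\<alpha> - 8*i, 8*u - 1 - 2*\<alpha> + 4*i, 16*u + 1 + 2*\<alpha> - 4*i]"

definition abs_values_B :: "int \<Rightarrow> int \<Rightarrow> int \<Rightarrow> int \<Rightarrow> int list" where
  "abs_values_B \<alpha> b u i =
     [4*u + 1 - 4*i, b + 4*u + 1 - 2*i, b + 2*i,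
      4*u - 1 + 4*i, b + 16*u + 2*i, b + 12*u + 1 - 2*i,
      - 2 - 4*\<alpha> + 8*i, 12*u - 1 - 2*\<alpha> + 4*i, 12*u + 1 + 2*\<alpha> - 4*i]"

lemma row_col_sums_mat_A:
  "row_sums (mat_A \<alpha> b u i) = [0, 0, 0] \<and> col_sums (mat_A \<alpha> b u i) = [4*\<alpha>, -2*\<alpha>, -2*\<alpha>]"
  by (simp add: mat_A_def row_sums_mat3x3 col_sums_mat3x3 algebra_simps)

lemma row_col_sums_mat_B:
  "row_sums (mat_B \<alpha> b u i) = [0, 0, 0] \<and> col_sums (mat_B \<alpha> b u i) = [4*\<alpha>, -2*\<alpha>, -2*\<alpha>]"
  by (simp add: mat_B_def row_sums_mat3x3 col_sums_mat3x3 algebra_simps)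

lemma abs_entries_mat_A:
  assumes "0 \<le> \<alpha>" "\<alpha> \<le> 1" "1 \<le> i" "i \<le> u" "0 \<le> b"
  shows "abs_entries (mat_A \<alpha> b u i) = mset (abs_values_A \<alpha> b u i)"
  unfolding mat_A_def abs_entries_mat3x3 abs_values_A_def
  using assms by (intro arg_cong[where f = mset]) (simp add: abs_if)

lemma abs_entries_mat_B:
  assumes "0 \<le> \<alpha>" "\<alpha> \<le> 1" "1 \<le> i" "i \<le> u" "0 \<le> b"
  shows "abs_entries (mat_B \<alpha> b u i) = mset (abs_values_B \<alpha> b u i)"
  unfolding mat_B_def abs_entries_mat3x3 abs_values_B_def
  using assms by (intro arg_cong[where f = mset]) (simp add: abs_if)

text \<open>With zero_less_numeral the slope conditions are discharged by simp only, which leaves the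
  affine maps (and hence their syntactic match with abs_values_A, abs_values_B) intact.\<close>

lemmas image_affine_atLeastAtMost =
  image_add_mult_atLeastAtMost image_diff_mult_atLeastAtMost zero_less_numeral

lemma odd_part_eq:
  fixes \<alpha> u :: int
  assumes "\<alpha> \<in> {0, 1}"
  shows "step_interval 1 (16*u - 1) 2 =
    ((\<lambda>i. - 1 + 4*i) ` {1..u} \<union> (\<lambda>i. 4*u + 1 - 4*i) ` {1..u}) \<union>
    ((\<lambda>i. 8*u + 1 - 4*i) ` {1..u} \<union> (\<lambda>i. 4*u - 1 + 4*i) ` {1..u}) \<union>
    ((\<lambda>i. 8*u - 1 - 2*\<alpha> + 4*i) ` {1..u} \<union> (\<lambda>i. 12*u + 1 + 2*\<alpha> - 4*i) ` {1..u}) \<union>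
    ((\<lambda>i. 12*u - 1 - 2*\<alpha> + 4*i) ` {1..u} \<union> (\<lambda>i. 16*u + 1 + 2*\<alpha> - 4*i) ` {1..u})"
proof -
  have "step_interval 1 (16*u - 1) 2 = step_interval 1 (4*u - 1) 2 \<union> step_interval (4*u + 1) (8*u - 1) 2
      \<union> step_interval (8*u + 1) (12*u - 1) 2 \<union> step_interval (12*u + 1) (16*u - 1) 2"
    by (auto simp: step_interval_iff; presburger)
  moreover have "step_interval 1 (4*u - 1) 2 = (\<lambda>i. - 1 + 4*i) ` {1..u} \<union> (\<lambda>i. 4*u + 1 - 4*i) ` {1..u}"
    by (simp only: image_affine_atLeastAtMost) (auto simp: step_interval_iff; presburger)
  moreover have "step_interval (4*u + 1) (8*u - 1) 2 = (\<lambda>i. 8*u + 1 - 4*i) ` {1..u} \<union> (\<lambda>i. 4*u - 1 + 4*i) ` {1..u}"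
    by (simp only: image_affine_atLeastAtMost) (auto simp: step_interval_iff; presburger)
  moreover have "step_interval (8*u + 1) (12*u - 1) 2 =
      (\<lambda>i. 8*u - 1 - 2*\<alpha> + 4*i) ` {1..u} \<union> (\<lambda>i. 12*u + 1 + 2*\<alpha> - 4*i) ` {1..u}"
    using assms by (simp only: image_affine_atLeastAtMost) (auto simp: step_interval_iff; presburger)
  moreover have "step_interval (12*u + 1) (16*u - 1) 2 =
      (\<lambda>i. 12*u - 1 - 2*\<alpha> + 4*i) ` {1..u} \<union> (\<lambda>i. 16*u + 1 + 2*\<alpha> - 4*i) ` {1..u}"
    using assms by (simp only: image_affine_atLeastAtMost) (auto simp: step_interval_iff; presburger)
  ultimately show ?thesis
    by simp
qed

lemma twice_odd_part_eq:
  fixes \<alpha> u :: int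
  assumes "\<alpha> \<in> {0, 1}"
  shows "step_interval 2 (8*u - 2) 4 = (\<lambda>i. 8*u + 2 + 4*\<alpha> - 8*i) ` {1..u} \<union> (\<lambda>i. - 2 - 4*\<alpha> + 8*i) ` {1..u}"
  using assms by (simp only: image_affine_atLeastAtMost) (auto simp: step_interval_iff; presburger)

lemma low_part_eq:
  "step_interval (b + 1) (b + 4*u) 1 =
     (\<lambda>i. b + 2*u + 1 - 2*i) ` {1..u} \<union> (\<lambda>i. b + 2*u + 2*i) ` {1..u} \<union>
     (\<lambda>i. b + 4*u + 1 - 2*i) ` {1..u} \<union> (\<lambda>i. b + 2*i) ` {1..u}"
  by (simp only: image_affine_atLeastAtMost) (auto simp: step_interval_iff; presburger)

lemma middle_part_eq:
  "step_interval (b + 10*u + 1) (b + 12*u) 1 =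
     (\<lambda>i. b + 10*u + 2*i) ` {1..u} \<union> (\<lambda>i. b + 12*u + 1 - 2*i) ` {1..u}"
  by (simp only: image_affine_atLeastAtMost) (auto simp: step_interval_iff; presburger)

lemma high_part_eq:
  "step_interval (b + 16*u + 1) (b + 18*u) 1 =
     (\<lambda>i. b + 16*u + 2*i) ` {1..u} \<union> (\<lambda>i. b + 18*u + 1 - 2*i) ` {1..u}"
  by (simp only: image_affine_atLeastAtMost) (auto simp: step_interval_iff; presburger)

definition abs_entry_set :: "int \<Rightarrow> int \<Rightarrow> int set" where
  "abs_entry_set u b = step_interval 1 (16 * u - 1) 2 \<union> step_interval 2 (8 * u - 2) 4
     \<union> step_interval (b + 1) (b + 4 * u) 1 \<union> step_interval (b + 10 * u + 1) (b + 12 * u) 1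
     \<union> step_interval (b + 16 * u + 1) (b + 18 * u) 1"

lemma UN_abs_values_eq_abs_entry_set:
  assumes "\<alpha> \<in> {0, 1}"
  shows "(\<Union>i\<in>{1..u}. set (abs_values_A \<alpha> b u i @ abs_values_B \<alpha> b u i)) = abs_entry_set u b"
  unfolding abs_entry_set_def odd_part_eq[OF assms] twice_odd_part_eq[OF assms]
    low_part_eq middle_part_eq high_part_eq abs_values_A_def abs_values_B_def
  by (simp only: set_append list.set) blast

lemma card_abs_entry_set:
  assumes "u \<ge> 1" and "b \<ge> 16 * u - 1"
  shows "card (abs_entry_set u b) = 18 * nat u"
proof -
  let ?I1 = "step_interval 1 (16 * u - 1) 2"
  let ?I2 = "step_interval 2 (8 * u - 2) 4"
  let ?I3 = "step_interval (b + 1) (b + 4 * u) 1"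
  let ?I4 = "step_interval (b + 10 * u + 1) (b + 12 * u) 1"
  let ?I5 = "step_interval (b + 16 * u + 1) (b + 18 * u) 1"
  have "(16 * u - 1 - 1) div 2 = 8 * u - 1" "(8 * u - 2 - 2) div 4 = 2 * u - 1"
    by presburger+
  then have cards: "card ?I1 = nat (8 * u)" "card ?I2 = nat (2 * u)" "card ?I3 = nat (4 * u)"
      "card ?I4 = nat (2 * u)" "card ?I5 = nat (2 * u)"
    using assms(1) by (simp_all add: card_step_interval)
  have "?I1 \<inter> ?I2 = {}"
    by (auto simp: step_interval_iff; presburger)
  moreover have "(?I1 \<union> ?I2) \<inter> ?I3 = {}" "(?I1 \<union> ?I2 \<union> ?I3) \<inter> ?I4 = {}"
      "(?I1 \<union> ?I2 \<union> ?I3 \<union> ?I4) \<inter> ?I5 = {}"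
    using assms by (auto simp: step_interval_iff)
  ultimately have "card (abs_entry_set u b) = card ?I1 + card ?I2 + card ?I3 + card ?I4 + card ?I5"
    unfolding abs_entry_set_def by (simp add: card_Un_disjoint finite_step_interval)
  also have "\<dots> = 18 * nat u"
    using assms(1) cards by (simp add: nat_mult_distrib)
  finally show ?thesis .
qed

definition mat_family :: "int \<Rightarrow> int \<Rightarrow> int \<Rightarrow> (int^3^3) set" where
  "mat_family \<alpha> b u = mat_A \<alpha> b u ` {1..u} \<union> mat_B \<alpha> b u ` {1..u}"

lemma mat_A_top_left: "mat_A \<alpha> b u i $ 0 $ 0 = 4*i - 1"
  by (simp add: mat_A_def mat3x3_def)

lemma mat_B_top_left: "mat_B \<alpha> b u i $ 0 $ 0 = 4*i - 4*u - 1"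
  by (simp add: mat_B_def mat3x3_def)

lemma inj_mat_A: "inj (mat_A \<alpha> b u)"
  by (rule injI, drule arg_cong[where f = "\<lambda>M. M $ 0 $ 0"]) (simp add: mat_A_top_left)

lemma inj_mat_B: "inj (mat_B \<alpha> b u)"
  by (rule injI, drule arg_cong[where f = "\<lambda>M. M $ 0 $ 0"]) (simp add: mat_B_top_left)

lemma mat_A_image_disjoint_mat_B_image:
  "mat_A \<alpha> b u ` {1..u} \<inter> mat_B \<alpha> b u ` {1..u} = {}"
proof -
  have "mat_A \<alpha> b u i \<noteq> mat_B \<alpha> b u j" if "i \<in> {1..u}" "j \<in> {1..u}" for i j
  proof
    assume "mat_A \<alpha> b u i = mat_B \<alpha> b u j"
    then have "4*i - 1 = 4*j - 4*u - 1"
      by (metis mat_A_top_left mat_B_top_left)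
    with that show False
      by simp
  qed
  then show ?thesis
    by blast
qed

lemma card_mat_family: "card (mat_family \<alpha> b u) = nat (2 * u)"
proof -
  have "card (mat_family \<alpha> b u) = card (mat_A \<alpha> b u ` {1..u}) + card (mat_B \<alpha> b u ` {1..u})"
    unfolding mat_family_def using mat_A_image_disjoint_mat_B_image by (simp add: card_Un_disjoint)
  also have "\<dots> = nat u + nat u"
    by (simp add: card_image inj_on_subset[OF inj_mat_A] inj_on_subset[OF inj_mat_B])
  also have "\<dots> = nat (2 * u)"
    by arith
  finally show ?thesis .
qed

lemma sum_abs_entries_mat_family:
  assumes "\<alpha> \<in> {0, 1}" and "b \<ge> 0"
  shows "(\<Sum>A\<in>mat_family \<alpha> b u. abs_entries A) =
    (\<Sum>i\<in>{1..u}. mset (abs_values_A \<alpha> b u i @ abs_values_B \<alpha> b u i))"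
proof -
  have "(\<Sum>A\<in>mat_family \<alpha> b u. abs_entries A) =
      (\<Sum>i\<in>{1..u}. abs_entries (mat_A \<alpha> b u i)) + (\<Sum>i\<in>{1..u}. abs_entries (mat_B \<alpha> b u i))"
    unfolding mat_family_def using mat_A_image_disjoint_mat_B_image
    by (simp add: sum.union_disjoint sum.reindex inj_on_subset[OF inj_mat_A] inj_on_subset[OF inj_mat_B])
  also have "\<dots> = (\<Sum>i\<in>{1..u}. abs_entries (mat_A \<alpha> b u i) + abs_entries (mat_B \<alpha> b u i))"
    by (simp add: sum.distrib)
  also have "\<dots> = (\<Sum>i\<in>{1..u}. mset (abs_values_A \<alpha> b u i @ abs_values_B \<alpha> b u i))"
    using assms by (intro sum.cong) (auto simp: abs_entries_mat_A abs_entries_mat_B)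
  finally show ?thesis .
qed

theorem lemma2p1:
  fixes \<alpha> u b :: int
  assumes "\<alpha> \<in> {0, 1}" and "u \<ge> 1" and "b \<ge> 16 * u - 1"
  shows "\<exists>\<AA> :: (int^3^3) set. finite \<AA> \<and> card \<AA> = nat (2 * u) \<and>
    (\<Sum>A\<in>\<AA>. abs_entries A) =
      mset_set (step_interval 1 (16 * u - 1) 2 \<union> step_interval 2 (8 * u - 2) 4
        \<union> step_interval (b + 1) (b + 4 * u) 1 \<union> step_interval (b + 10 * u + 1) (b + 12 * u) 1
        \<union> step_interval (b + 16 * u + 1) (b + 18 * u) 1) \<and>
    (\<forall>A\<in>\<AA>. row_sums A = [0, 0, 0] \<and> col_sums A = [4 * \<alpha>, -2 * \<alpha>, -2 * \<alpha>])"
proof -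
  let ?M = "\<Sum>i\<in>{1..u}. mset (abs_values_A \<alpha> b u i @ abs_values_B \<alpha> b u i)"
  have "set_mset ?M = abs_entry_set u b"
    using UN_abs_values_eq_abs_entry_set[OF assms(1)] by (simp add: set_mset_sum)
  moreover have "size ?M = card (abs_entry_set u b)"
    using card_abs_entry_set[OF assms(2,3)] assms(2) by (simp add: abs_values_A_def abs_values_B_def)
  ultimately have "?M = mset_set (abs_entry_set u b)"
    by (rule mset_set_eqI)
  then have "(\<Sum>A\<in>mat_family \<alpha> b u. abs_entries A) = mset_set (abs_entry_set u b)"
    using assms by (simp add: sum_abs_entries_mat_family)
  moreover have "finite (mat_family \<alpha> b u)"
    by (simp add: mat_family_def)
  moreover have "\<forall>A\<in>mat_family \<alpha> b u. row_sums A = [0, 0, 0] \<and> col_sums A = [4 * \<alpha>, -2 * \<alpha>, -2 * \<alpha>]"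
    by (auto simp: mat_family_def row_col_sums_mat_A row_col_sums_mat_B)
  ultimately show ?thesis
    unfolding abs_entry_set_def using card_mat_family by blast
qed

end
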